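(* Let $A\in\mathbb{R}^{m\times n}$, $b\in\mathbb{R}^m$ and $\delta\ge 0$, and assume $\{x\in\mathbb{R}^n:\|Ax-b\|\le\delta\}\neq\emptyset$. Let $\mathcal{S}^*$ be the set of globally optimal solutions of $$\min_{x,v\in\mathbb{R}^n}\{\langle e,e-v\rangle:\ \|Ax-b\|\le\delta,\ \langle v,|x|\rangle=0,\ 0\le v\le e\},$$ and for $\rho>0$ let $\mathcal{S}^*_\rho$ be the set of globally optimal solutions of $$\min_{x,v\in\mathbb{R}^n}\{\langle e,e-v\rangle+\rho\langle v,|x|\rangle:\ \|Ax-b\|\le\delta,\ 0\le v\le e\}.$$ Then there exists a constant $\bar\rho>0$ such that $\mathcal{S}^*=\mathcal{S}^*_\rho$ for all $\rho>\bar\rho$.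
   Context: $\|\cdot\|$ is the Euclidean norm, $e\in\mathbb{R}^n$ is the all-ones vector, $|x|$ is the componentwise absolute value, and vector inequalities are componentwise. *)

theory Defs
  imports "HOL-Analysis.Analysis"
begin

definition ones :: "real ^ 'n" where
  "ones = (\<chi> i. 1)"

definition vabs :: "real ^ 'n \<Rightarrow> real ^ 'n" where
  "vabs x = (\<chi> i. \<bar>x $ i\<bar>)"

definition feas_orig :: "real ^ 'n ^ 'm \<Rightarrow> real ^ 'm \<Rightarrow> real \<Rightarrow> ((real ^ 'n) \<times> (real ^ 'n)) set" where
  "feas_orig A b \<delta> = {(x, v). norm (A *v x - b) \<le> \<delta> \<and> v \<bullet> vabs x = 0 \<and>
       (\<forall>i. 0 \<le> v $ i \<and> v $ i \<le> 1)}"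

definition feas_pen :: "real ^ 'n ^ 'm \<Rightarrow> real ^ 'm \<Rightarrow> real \<Rightarrow> ((real ^ 'n) \<times> (real ^ 'n)) set" where
  "feas_pen A b \<delta> = {(x, v). norm (A *v x - b) \<le> \<delta> \<and> (\<forall>i. 0 \<le> v $ i \<and> v $ i \<le> 1)}"

definition obj_orig :: "(real ^ 'n) \<times> (real ^ 'n) \<Rightarrow> real" where
  "obj_orig p = ones \<bullet> (ones - snd p)"

definition obj_pen :: "real \<Rightarrow> (real ^ 'n) \<times> (real ^ 'n) \<Rightarrow> real" where
  "obj_pen \<rho> p = ones \<bullet> (ones - snd p) + \<rho> * (snd p \<bullet> vabs (fst p))"

definition global_opt :: "('a \<Rightarrow> real) \<Rightarrow> 'a set \<Rightarrow> 'a set" where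
  "global_opt f F = {p \<in> F. \<forall>q \<in> F. f p \<le> f q}"

definition S_star :: "real ^ 'n ^ 'm \<Rightarrow> real ^ 'm \<Rightarrow> real \<Rightarrow> ((real ^ 'n) \<times> (real ^ 'n)) set" where
  "S_star A b \<delta> = global_opt obj_orig (feas_orig A b \<delta>)"

definition S_star_rho :: "real ^ 'n ^ 'm \<Rightarrow> real ^ 'm \<Rightarrow> real \<Rightarrow> real \<Rightarrow> ((real ^ 'n) \<times> (real ^ 'n)) set" where
  "S_star_rho A b \<delta> \<rho> = global_opt (obj_pen \<rho>) (feas_pen A b \<delta>)"

end

theory Submission imports Defs begin

text \<open>Let \<open>s\<close> be the least number of nonzero entries of a feasible \<open>x\<close>. A compactness
  argument gives one threshold \<open>\<epsilon> > 0\<close> such that every feasible \<open>x\<close> has at least \<open>s\<close>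
  entries with \<open>|x\<^sub>i| \<ge> \<epsilon>\<close>: for each support \<open>T\<close> with fewer than \<open>s\<close> elements, the image
  under \<open>A\<close> of the vectors supported in \<open>T\<close> is a closed subspace disjoint from the compact
  ball \<open>cball b \<delta>\<close>, hence at positive distance from it. Once \<open>\<rho>\<epsilon> > 1\<close>, each summand
  \<open>1 - v\<^sub>i + \<rho> v\<^sub>i |x\<^sub>i|\<close> of the penalized objective dominates the indicator of
  \<open>|x\<^sub>i| \<ge> \<epsilon>\<close>, so both problems have optimal value \<open>s\<close>, attained by a sparsest \<open>x\<close>
  with \<open>v\<close> the indicator of its zeros, and a penalized point of value \<open>s\<close> is forced to
  satisfy the complementarity constraint.\<close>

definition nnz :: "real ^ 'n \<Rightarrow> nat" where
  "nnz x = card {i. x $ i \<noteq> 0}"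

lemma preimage_compact_uniformly_off_support:
  fixes f :: "real ^ 'n \<Rightarrow> 'b::euclidean_space" and T :: "'n set"
  assumes "linear f" "compact K"
    and no_support: "\<And>y. f y \<in> K \<Longrightarrow> \<exists>i. i \<notin> T \<and> y $ i \<noteq> 0"
  shows "\<exists>e>0. \<forall>x. f x \<in> K \<longrightarrow> (\<exists>i. i \<notin> T \<and> e \<le> \<bar>x $ i\<bar>)"
proof -
  let ?L = "{y :: real ^ 'n. \<forall>i. i \<notin> T \<longrightarrow> y $ i = 0}"
  have "subspace ?L" unfolding subspace_def by auto
  then have "closed (f ` ?L)"
    using \<open>linear f\<close> by (intro closed_subspace linear_subspace_image)
  moreover have "K \<inter> f ` ?L = {}" using no_support by auto
  ultimately obtain d where d: "d > 0" "\<forall>u\<in>K. \<forall>w\<in>f ` ?L. d \<le> dist u w"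
    using separate_compact_closed[OF \<open>compact K\<close>] by blast
  obtain C where C: "C > 0" "\<And>z. norm (f z) \<le> C * norm z"
    using linear_bounded_pos[OF \<open>linear f\<close>] by blast
  define e where "e = d / (2 * C * CARD('n))"
  have "e > 0" unfolding e_def using d C by simp
  moreover have "\<exists>i. i \<notin> T \<and> e \<le> \<bar>x $ i\<bar>" if "f x \<in> K" for x
  proof (rule ccontr)
    assume small: "\<not> ?thesis"
    define y :: "real ^ 'n" where "y = (\<chi> i. if i \<in> T then x $ i else 0)"
    have "f y \<in> f ` ?L" by (auto simp: y_def)
    then have "d \<le> dist (f x) (f y)" using d(2) that by blast
    also have "\<dots> \<le> C * norm (x - y)"
      using C(2) by (simp add: dist_norm linear_diff[OF \<open>linear f\<close>, symmetric])
    also have "norm (x - y) \<le> (\<Sum>i\<in>UNIV. \<bar>(x - y) $ i\<bar>)" by (rule norm_le_l1_cart)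
    also have "\<dots> \<le> (\<Sum>i\<in>(UNIV::'n set). e)"
      using small by (intro sum_mono) (auto simp: y_def not_le less_imp_le \<open>e > 0\<close>)
    finally have "d \<le> C * (CARD('n) * e)" using C by (simp add: mult_left_mono)
    then show False using C d by (simp add: e_def)
  qed
  ultimately show ?thesis by blast
qed

lemma preimage_compact_many_large_coordinates:
  fixes f :: "real ^ 'n \<Rightarrow> 'b::euclidean_space"
  assumes "linear f" "compact K"
    and sparsity: "\<And>y. f y \<in> K \<Longrightarrow> k \<le> nnz y"
  shows "\<exists>\<epsilon>>0. \<forall>x. f x \<in> K \<longrightarrow> k \<le> card {i. \<epsilon> \<le> \<bar>x $ i\<bar>}"
proof -
  let ?Small = "{T :: 'n set. card T < k}"
  have "\<exists>e>0. \<forall>x. f x \<in> K \<longrightarrow> (\<exists>i. i \<notin> T \<and> e \<le> \<bar>x $ i\<bar>)" if "T \<in> ?Small" for T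
  proof (rule preimage_compact_uniformly_off_support[OF assms(1,2)])
    fix y assume "f y \<in> K"
    show "\<exists>i. i \<notin> T \<and> y $ i \<noteq> 0"
    proof (rule ccontr)
      assume "\<not> ?thesis"
      then have "nnz y \<le> card T" unfolding nnz_def by (intro card_mono) auto
      then show False using sparsity[OF \<open>f y \<in> K\<close>] that by simp
    qed
  qed
  then obtain e where e: "\<And>T. T \<in> ?Small \<Longrightarrow>
      e T > 0 \<and> (\<forall>x. f x \<in> K \<longrightarrow> (\<exists>i. i \<notin> T \<and> e T \<le> \<bar>x $ i\<bar>))"
    by metis
  define \<epsilon> where "\<epsilon> = Min (insert 1 (e ` ?Small))"
  have \<epsilon>_le: "\<epsilon> \<le> e T" if "T \<in> ?Small" for T
    unfolding \<epsilon>_def using that by (intro Min_le) auto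
  have "\<epsilon> > 0" unfolding \<epsilon>_def using e by (subst Min_gr_iff) auto
  moreover have "k \<le> card {i. \<epsilon> \<le> \<bar>x $ i\<bar>}" if x: "f x \<in> K" for x
  proof (rule ccontr)
    let ?T = "{i. \<epsilon> \<le> \<bar>x $ i\<bar>}"
    assume "\<not> k \<le> card ?T"
    then have "?T \<in> ?Small" by simp
    then obtain i where "i \<notin> ?T" "e ?T \<le> \<bar>x $ i\<bar>" using e x by blast
    then show False using \<epsilon>_le[OF \<open>?T \<in> ?Small\<close>] by simp
  qed
  ultimately show ?thesis by blast
qed

lemma feas_orig_eq: "feas_orig A b \<delta> = {p \<in> feas_pen A b \<delta>. snd p \<bullet> vabs (fst p) = 0}"
  unfolding feas_orig_def feas_pen_def by auto

lemma obj_pen_eq_obj_orig: "snd p \<bullet> vabs (fst p) = 0 \<Longrightarrow> obj_pen \<rho> p = obj_orig p"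
  unfolding obj_pen_def obj_orig_def by simp

lemma obj_pen_eq_sum: "obj_pen \<rho> (x, v) = (\<Sum>i\<in>UNIV. 1 - v $ i + \<rho> * (v $ i * \<bar>x $ i\<bar>))"
  by (simp add: obj_pen_def inner_vec_def ones_def vabs_def sum.distrib sum_distrib_left)

lemma card_eq_sum_indicator: "card {i. P i} = (\<Sum>i\<in>(UNIV::'n::finite set). if P i then 1 else (0::real))"
  by (simp add: sum.If_cases)

definition zero_indicator :: "real ^ 'n \<Rightarrow> real ^ 'n" where
  "zero_indicator x = (\<chi> i. if x $ i = 0 then 1 else 0)"

lemma zero_indicator_complementary: "zero_indicator x \<bullet> vabs x = 0"
  by (auto simp: zero_indicator_def vabs_def inner_vec_def intro: sum.neutral)

lemma obj_pen_zero_indicator: "obj_pen \<rho> (x, zero_indicator x) = nnz x"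
proof -
  have "obj_pen \<rho> (x, zero_indicator x) = (\<Sum>i\<in>UNIV. if x $ i \<noteq> 0 then 1 else (0::real))"
    unfolding obj_pen_eq_sum zero_indicator_def by (intro sum.cong) auto
  then show ?thesis unfolding nnz_def card_eq_sum_indicator by simp
qed

lemma penalty_term_ge_indicator:
  fixes \<rho> \<epsilon> v t :: real
  assumes "1 \<le> \<rho> * \<epsilon>" "0 \<le> \<rho>" "0 \<le> v" "v \<le> 1"
  shows "(if \<epsilon> \<le> \<bar>t\<bar> then 1 else 0) \<le> 1 - v + \<rho> * (v * \<bar>t\<bar>)"
proof (cases "\<epsilon> \<le> \<bar>t\<bar>")
  case True
  have "1 \<le> \<rho> * \<bar>t\<bar>" using assms(1) mult_left_mono[OF True assms(2)] by linarith
  then have "v * 1 \<le> v * (\<rho> * \<bar>t\<bar>)" using assms(3) by (rule mult_left_mono)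
  with True show ?thesis by (simp add: algebra_simps)
qed (use assms in auto)

lemma penalty_term_eq_indicator_imp:
  fixes \<rho> \<epsilon> v t :: real
  assumes "1 < \<rho> * \<epsilon>" "0 < \<rho>" "0 \<le> v" "v \<le> 1"
    and eq: "(if \<epsilon> \<le> \<bar>t\<bar> then 1 else 0) = 1 - v + \<rho> * (v * \<bar>t\<bar>)"
  shows "v * \<bar>t\<bar> = 0"
proof (cases "\<epsilon> \<le> \<bar>t\<bar>")
  case True
  have "1 < \<rho> * \<bar>t\<bar>" using assms(1,2) mult_left_mono[OF True, of \<rho>] by linarith
  moreover have "v * (\<rho> * \<bar>t\<bar> - 1) = 0" using eq True by (simp add: algebra_simps)
  ultimately show ?thesis by simp
next
  case False
  have "1 - v + \<rho> * (v * \<bar>t\<bar>) = 0" using eq False by simp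
  moreover have "0 \<le> \<rho> * (v * \<bar>t\<bar>)" using assms(2,3) by simp
  ultimately have "\<rho> * (v * \<bar>t\<bar>) = 0" using assms(4) by linarith
  then show ?thesis using assms(2) by simp
qed

lemma card_large_coordinates_le_obj_pen:
  assumes "1 \<le> \<rho> * \<epsilon>" "0 \<le> \<rho>" "\<forall>i. 0 \<le> v $ i \<and> v $ i \<le> 1"
  shows "card {i. \<epsilon> \<le> \<bar>x $ i\<bar>} \<le> obj_pen \<rho> (x, v)"
  unfolding card_eq_sum_indicator obj_pen_eq_sum
  using assms by (intro sum_mono penalty_term_ge_indicator) auto

lemma obj_pen_le_card_large_coordinates_imp_complementary:
  assumes "1 < \<rho> * \<epsilon>" "0 < \<rho>" "\<forall>i. 0 \<le> v $ i \<and> v $ i \<le> 1"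
    and "obj_pen \<rho> (x, v) \<le> card {i. \<epsilon> \<le> \<bar>x $ i\<bar>}"
  shows "v \<bullet> vabs x = 0"
proof -
  have "card {i. \<epsilon> \<le> \<bar>x $ i\<bar>} = obj_pen \<rho> (x, v)"
    using assms card_large_coordinates_le_obj_pen[of \<rho> \<epsilon> v x] by simp
  then have "(if \<epsilon> \<le> \<bar>x $ i\<bar> then 1 else 0) = 1 - v $ i + \<rho> * (v $ i * \<bar>x $ i\<bar>)" for i
    unfolding card_eq_sum_indicator obj_pen_eq_sum
    by (rule sum_mono_inv) (use assms penalty_term_ge_indicator in auto)
  then have "v $ i * \<bar>x $ i\<bar> = 0" for i
    using assms(1-3) penalty_term_eq_indicator_imp by metis
  then show ?thesis by (auto simp: vabs_def inner_vec_def intro!: sum.neutral)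
qed

lemma global_opt_eq_of_common_minimizer:
  assumes "F \<subseteq> G" "\<And>q. q \<in> F \<Longrightarrow> f q = g q" "p \<in> F"
    and min: "\<And>q. q \<in> G \<Longrightarrow> g p \<le> g q"
    and "\<And>q. q \<in> G \<Longrightarrow> g q = g p \<Longrightarrow> q \<in> F"
  shows "global_opt f F = global_opt g G"
proof (intro set_eqI iffI)
  fix q assume "q \<in> global_opt f F"
  then have "q \<in> F" "f q \<le> f p" using \<open>p \<in> F\<close> by (auto simp: global_opt_def)
  then have "g q = g p" using assms by (metis order.antisym subsetD)
  then show "q \<in> global_opt g G" using \<open>q \<in> F\<close> assms by (auto simp: global_opt_def)
next
  fix q assume "q \<in> global_opt g G"
  then have "q \<in> G" "g q \<le> g p" using \<open>p \<in> F\<close> \<open>F \<subseteq> G\<close> by (auto simp: global_opt_def)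
  then have "g q = g p" using min by (simp add: order.antisym)
  then show "q \<in> global_opt f F" using \<open>q \<in> G\<close> assms by (auto simp: global_opt_def)
qed

lemma S_star_eq_S_star_rho_beyond_threshold:
  assumes \<rho>: "0 < \<rho>" "1 < \<rho> * \<epsilon>"
    and x0: "norm (A *v x0 - b) \<le> \<delta>"
    and large: "\<And>x. norm (A *v x - b) \<le> \<delta> \<Longrightarrow> nnz x0 \<le> card {i. \<epsilon> \<le> \<bar>x $ i\<bar>}"
  shows "S_star A b \<delta> = S_star_rho A b \<delta> \<rho>"
proof -
  let ?p0 = "(x0, zero_indicator x0)"
  have p0_feasible: "?p0 \<in> feas_orig A b \<delta>"
    using x0 zero_indicator_complementary by (auto simp: feas_orig_def zero_indicator_def)
  have lower: "nnz x0 \<le> obj_pen \<rho> (x, v)" if "(x, v) \<in> feas_pen A b \<delta>" for x v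
  proof -
    have "real (nnz x0) \<le> card {i. \<epsilon> \<le> \<bar>x $ i\<bar>}"
      using that large by (simp add: feas_pen_def)
    also have "\<dots> \<le> obj_pen \<rho> (x, v)"
      using that \<rho> by (intro card_large_coordinates_le_obj_pen) (auto simp: feas_pen_def)
    finally show ?thesis .
  qed
  have attained: "(x, v) \<in> feas_orig A b \<delta>"
    if "(x, v) \<in> feas_pen A b \<delta>" "obj_pen \<rho> (x, v) = nnz x0" for x v
  proof -
    have "v \<bullet> vabs x = 0"
      using that large[of x] \<rho>
      by (intro obj_pen_le_card_large_coordinates_imp_complementary[of \<rho> \<epsilon>])
        (auto simp: feas_pen_def)
    then show ?thesis using that(1) by (simp add: feas_orig_eq)
  qed
  show ?thesis
    unfolding S_star_def S_star_rho_def
  proof (rule global_opt_eq_of_common_minimizer[OF _ _ p0_feasible])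
    show "feas_orig A b \<delta> \<subseteq> feas_pen A b \<delta>" by (auto simp: feas_orig_eq)
    show "obj_orig q = obj_pen \<rho> q" if "q \<in> feas_orig A b \<delta>" for q
      using that by (simp add: feas_orig_eq obj_pen_eq_obj_orig)
    show "obj_pen \<rho> ?p0 \<le> obj_pen \<rho> q" if "q \<in> feas_pen A b \<delta>" for q
      using lower[of "fst q" "snd q"] that by (simp add: obj_pen_zero_indicator)
    show "q \<in> feas_orig A b \<delta>" if "q \<in> feas_pen A b \<delta>" "obj_pen \<rho> q = obj_pen \<rho> ?p0" for q
      using attained[of "fst q" "snd q"] that by (simp add: obj_pen_zero_indicator)
  qed
qed

theorem theorem3p1:
  fixes A :: "real ^ 'n ^ 'm" and b :: "real ^ 'm" and \<delta> :: real
  assumes "\<delta> \<ge> 0"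
    and "{x :: real ^ 'n. norm (A *v x - b) \<le> \<delta>} \<noteq> {}"
  shows "\<exists>\<rho>bar > 0. \<forall>\<rho> > \<rho>bar. S_star A b \<delta> = S_star_rho A b \<delta> \<rho>"
proof -
  have feasible_iff: "norm (A *v x - b) \<le> \<delta> \<longleftrightarrow> A *v x \<in> cball b \<delta>" for x
    by (simp add: dist_norm norm_minus_commute)
  obtain x1 where "norm (A *v x1 - b) \<le> \<delta>" using assms(2) by blast
  then obtain x0 where x0: "norm (A *v x0 - b) \<le> \<delta>"
    and sparsest: "\<And>y. norm (A *v y - b) \<le> \<delta> \<Longrightarrow> nnz x0 \<le> nnz y"
    using ex_has_least_nat[of "\<lambda>x. norm (A *v x - b) \<le> \<delta>" x1 nnz] by blast
  obtain \<epsilon> where "\<epsilon> > 0"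
    and large: "\<And>x. norm (A *v x - b) \<le> \<delta> \<Longrightarrow> nnz x0 \<le> card {i. \<epsilon> \<le> \<bar>x $ i\<bar>}"
    using preimage_compact_many_large_coordinates[OF matrix_vector_mul_linear compact_cball
        sparsest[unfolded feasible_iff]] unfolding feasible_iff by blast
  have "S_star A b \<delta> = S_star_rho A b \<delta> \<rho>" if "\<rho> > 1 / \<epsilon>" for \<rho>
  proof (rule S_star_eq_S_star_rho_beyond_threshold[OF _ _ x0 large])
    show "0 < \<rho>" using that \<open>\<epsilon> > 0\<close> by (smt (verit) divide_pos_pos)
    show "1 < \<rho> * \<epsilon>" using that \<open>\<epsilon> > 0\<close> by (simp add: field_simps)
  qed
  then show ?thesis using \<open>\<epsilon> > 0\<close> by (intro exI[of _ "1 / \<epsilon>"]) auto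
qed

end
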